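(* Let $n\geqslant 2$, $\varepsilon \in [0,1]$, $p \geqslant 2$ an integer, and $\bm x \in \mathcal Y(\varepsilon,p)$. Define $\mu = 1/n$ and the coefficient of variation $\mathrm{CV}(\bm x) = \sqrt{\frac1n \sum_{i=1}^n (x_i-\mu)^2}\,/\,\mu$. Then $$(\mathrm{CV}(\bm x))^2 \leqslant B_p(\varepsilon) := \frac{(D_p+1)^2}{(1+\varepsilon D_p)^2} - 1.$$ Moreover, $B_p(\varepsilon)$ is strictly decreasing in $\varepsilon$ on $[0,1]$, with $B_p(0) = (D_p+1)^2 - 1$ and $B_p(1) = 0$.
   Context: For $\bm x \in \mathbb{R}^n_{\geqslant 0}$ and $p\geqslant 1$, $\|\bm x\|_p = (\sum_{i=1}^n x_i^p)^{1/p}$. Define $D_p = n^{1-1/p}-1$. Let $\Delta_n = \{\bm x \in \mathbb{R}^n_{\geqslant 0} : \sum_{i=1}^n x_i = 1\}$ be the probability simplex, and for $\varepsilon\in[0,1]$ and integer $p\geqslant 2$ let $\mathcal Y(\varepsilon,p) = \{\bm x \in \Delta_n : (1+\varepsilon D_p)\|\bm x\|_p \leqslant 1\}$. *)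

theory Defs
  imports Complex_Main
begin

text \<open>Vectors in R^n are represented as functions nat => real, using coordinates 0..n-1.\<close>

definition pnorm :: "nat \<Rightarrow> nat \<Rightarrow> (nat \<Rightarrow> real) \<Rightarrow> real" where
  "pnorm n p x = (\<Sum>i<n. x i ^ p) powr (1 / real p)"

definition Dp :: "nat \<Rightarrow> nat \<Rightarrow> real" where
  "Dp n p = real n powr (1 - 1 / real p) - 1"

definition simplex :: "nat \<Rightarrow> (nat \<Rightarrow> real) set" where
  "simplex n = {x. (\<forall>i<n. 0 \<le> x i) \<and> (\<Sum>i<n. x i) = 1}"

definition Yset :: "nat \<Rightarrow> real \<Rightarrow> nat \<Rightarrow> (nat \<Rightarrow> real) set" where
  "Yset n \<epsilon> p = {x \<in> simplex n. (1 + \<epsilon> * Dp n p) * pnorm n p x \<le> 1}"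

definition CV :: "nat \<Rightarrow> (nat \<Rightarrow> real) \<Rightarrow> real" where
  "CV n x = (let \<mu> = 1 / real n in sqrt ((1 / real n) * (\<Sum>i<n. (x i - \<mu>)^2)) / \<mu>)"

definition Bp :: "nat \<Rightarrow> nat \<Rightarrow> real \<Rightarrow> real" where
  "Bp n p \<epsilon> = (Dp n p + 1)^2 / (1 + \<epsilon> * Dp n p)^2 - 1"

end

theory Submission
  imports Defs "HOL-Analysis.Analysis"
begin

text \<open>
  On the simplex, \<open>CV(x)\<^sup>2 = n \<parallel>x\<parallel>\<^sub>2\<^sup>2 - 1\<close>. The power mean inequality
  \<open>n \<parallel>x\<parallel>\<^sub>2\<^sup>2 \<le> n\<^bsup>2 - 2/p\<^esup> \<parallel>x\<parallel>\<^sub>p\<^sup>2 = (D\<^sub>p + 1)\<^sup>2 \<parallel>x\<parallel>\<^sub>p\<^sup>2\<close> together with the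
  defining constraint \<open>\<parallel>x\<parallel>\<^sub>p \<le> 1 / (1 + \<epsilon> D\<^sub>p)\<close> of \<open>\<Y>(\<epsilon>,p)\<close> gives the bound.
  Since \<open>D\<^sub>p > 0\<close>, the denominator of \<open>B\<^sub>p(\<epsilon>)\<close> grows with \<open>\<epsilon>\<close>, so \<open>B\<^sub>p\<close> decreases.
\<close>

lemma power2_le_Young:
  fixes u :: real and p :: nat
  assumes "0 \<le> u" "2 \<le> p"
  shows "u\<^sup>2 \<le> 2 / p * u ^ p + (1 - 2 / p)"
proof (cases "u = 0")
  case False
  with assms have "0 < u" by simp
  have "(u ^ p) powr (2 / p) = (u powr p) powr (2 / p)"
    using \<open>0 < u\<close> by (simp add: powr_realpow)
  also have "\<dots> = u powr 2"
    using assms(2) by (simp add: powr_powr)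
  also have "\<dots> = u\<^sup>2"
    using \<open>0 < u\<close> by (simp add: powr_realpow)
  finally have "(u ^ p) powr (2 / p) = u\<^sup>2" .
  moreover have "(u ^ p) powr (2 / p) * 1 powr (1 - 2 / p) \<le> 2 / p * u ^ p + (1 - 2 / p) * 1"
    by (rule Youngs_inequality_0) (use assms \<open>0 < u\<close> in auto)
  ultimately show ?thesis by simp
qed (use assms in simp)

lemma pnorm_power:
  assumes "0 < p" "\<And>i. i < n \<Longrightarrow> 0 \<le> x i"
  shows "pnorm n p x ^ p = (\<Sum>i<n. x i ^ p)"
proof (cases "(\<Sum>i<n. x i ^ p) = 0")
  case False
  moreover have "0 \<le> (\<Sum>i<n. x i ^ p)"
    by (intro sum_nonneg zero_le_power) (simp add: assms(2))
  ultimately have pos: "0 < (\<Sum>i<n. x i ^ p)" by simp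
  then have "pnorm n p x ^ p = pnorm n p x powr p"
    by (simp add: pnorm_def powr_realpow)
  also have "\<dots> = (\<Sum>i<n. x i ^ p)"
    using assms(1) pos by (simp add: pnorm_def powr_powr)
  finally show ?thesis .
qed (use assms(1) in \<open>simp add: pnorm_def\<close>)

lemma pnorm_eq_0_iff:
  assumes "0 < p" "\<And>i. i < n \<Longrightarrow> 0 \<le> x i"
  shows "pnorm n p x = 0 \<longleftrightarrow> (\<forall>i<n. x i = 0)"
proof -
  have "pnorm n p x = 0 \<longleftrightarrow> (\<Sum>i<n. x i ^ p) = 0"
    by (simp add: pnorm_def)
  also have "\<dots> \<longleftrightarrow> (\<forall>i<n. x i = 0)"
    using assms by (subst sum_nonneg_eq_0_iff) auto
  finally show ?thesis .
qed

text \<open>Sum \<open>power2_le_Young\<close> over \<open>u\<^sub>i = c x\<^sub>i / \<parallel>x\<parallel>\<^sub>p\<close>, where \<open>c\<^sup>p = n\<close>.\<close>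

lemma power_mean_power2_pnorm:
  fixes x :: "nat \<Rightarrow> real"
  assumes "0 < n" "2 \<le> p" "\<And>i. i < n \<Longrightarrow> 0 \<le> x i"
  shows "real n * (\<Sum>i<n. (x i)\<^sup>2) \<le> (real n powr (1 - 1 / p) * pnorm n p x)\<^sup>2"
proof (cases "pnorm n p x = 0")
  case True
  then show ?thesis using assms by (simp add: pnorm_eq_0_iff)
next
  case False
  define S where "S = pnorm n p x"
  define c where "c = real n powr (1 / p)"
  have "0 < S" using False by (simp add: S_def pnorm_def)
  have "0 < c" using assms(1) by (simp add: c_def)
  have Sp: "S ^ p = (\<Sum>i<n. x i ^ p)"
    unfolding S_def using assms by (simp add: pnorm_power)
  have "c ^ p = c powr p"
    using \<open>0 < c\<close> by (simp add: powr_realpow)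
  also have "\<dots> = n"
    using assms(1,2) by (simp add: c_def powr_powr)
  finally have cp: "c ^ p = n" .
  have "c\<^sup>2 / S\<^sup>2 * (\<Sum>i<n. (x i)\<^sup>2) = (\<Sum>i<n. (c * x i / S)\<^sup>2)"
    by (simp add: sum_distrib_left power_divide power_mult_distrib)
  also have "\<dots> \<le> (\<Sum>i<n. 2 / p * (c * x i / S) ^ p + (1 - 2 / p))"
    by (intro sum_mono power2_le_Young)
      (use assms \<open>0 < c\<close> \<open>0 < S\<close> in auto)
  also have "\<dots> = 2 / p * (c ^ p / S ^ p * (\<Sum>i<n. x i ^ p)) + n * (1 - 2 / p)"
    by (simp add: sum.distrib sum_distrib_left power_divide power_mult_distrib)
  also have "\<dots> = n"
    using \<open>0 < S\<close> by (simp add: Sp [symmetric] cp field_simps)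
  finally have "c\<^sup>2 * (\<Sum>i<n. (x i)\<^sup>2) \<le> n * S\<^sup>2"
    using \<open>0 < S\<close> by (simp add: field_simps)
  then have "real n * (\<Sum>i<n. (x i)\<^sup>2) \<le> (n / c * S)\<^sup>2"
    using \<open>0 < c\<close> assms(1) by (simp add: field_simps power2_eq_square)
  moreover have "n / c = real n powr (1 - 1 / p)"
    using assms(1) by (simp add: c_def powr_diff)
  ultimately show ?thesis by (simp add: S_def)
qed

lemma CV_power2_simplex:
  assumes "0 < n" "x \<in> Defs.simplex n"
  shows "(CV n x)\<^sup>2 = real n * (\<Sum>i<n. (x i)\<^sup>2) - 1"
proof -
  have sum1: "(\<Sum>i<n. x i) = 1" using assms(2) by (simp add: Defs.simplex_def)
  have "(\<Sum>i<n. (x i - 1 / n)\<^sup>2) = (\<Sum>i<n. (x i)\<^sup>2) - 2 / n * (\<Sum>i<n. x i) + n * (1 / n)\<^sup>2"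
    by (simp add: power2_diff sum.distrib sum_subtractf sum_distrib_left)
  also have "\<dots> = (\<Sum>i<n. (x i)\<^sup>2) - 1 / n"
    using assms(1) by (simp add: sum1 power2_eq_square)
  finally have var: "(\<Sum>i<n. (x i - 1 / n)\<^sup>2) = (\<Sum>i<n. (x i)\<^sup>2) - 1 / n" .
  have "(CV n x)\<^sup>2 = (sqrt ((\<Sum>i<n. (x i - 1 / n)\<^sup>2) / n))\<^sup>2 * (real n)\<^sup>2"
    by (simp add: CV_def Let_def power_mult_distrib)
  also have "\<dots> = real n * (\<Sum>i<n. (x i - 1 / n)\<^sup>2)"
    using assms(1) by (simp add: sum_nonneg power2_eq_square)
  finally show ?thesis
    using assms(1) by (simp add: var right_diff_distrib)
qed

lemma Dp_pos:
  assumes "1 < n" "1 < p"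
  shows "0 < Dp n p"
proof -
  have "0 < 1 - 1 / real p" using assms(2) by simp
  then have "1 < real n powr (1 - 1 / p)"
    using assms(1) by (simp add: gr_one_powr)
  then show ?thesis by (simp add: Dp_def)
qed

lemma Bp_strict_antimono:
  assumes "0 < Dp n p" "0 \<le> a" "a < b"
  shows "Bp n p b < Bp n p a"
proof -
  let ?D = "Dp n p"
  have "0 < 1 + a * ?D" using assms(1,2) by (simp add: add_pos_nonneg)
  moreover have "1 + a * ?D < 1 + b * ?D" using assms(1,3) by simp
  ultimately have sq: "(1 + a * ?D)\<^sup>2 < (1 + b * ?D)\<^sup>2" and pa: "0 < (1 + a * ?D)\<^sup>2"
    by (simp_all add: power_strict_mono)
  from sq pa have pb: "0 < (1 + b * ?D)\<^sup>2" by linarith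
  have "0 < (?D + 1)\<^sup>2" using assms(1) by (simp add: add_pos_pos)
  from divide_strict_left_mono [OF sq this mult_pos_pos [OF pb pa]]
  show ?thesis by (simp add: Bp_def)
qed

theorem proposition2:
  fixes n p :: nat and \<epsilon> :: real and x :: "nat \<Rightarrow> real"
  assumes "n \<ge> 2" and "0 \<le> \<epsilon>" and "\<epsilon> \<le> 1" and "p \<ge> 2"
    and "x \<in> Yset n \<epsilon> p"
  shows "(CV n x)^2 \<le> Bp n p \<epsilon>
         \<and> (\<forall>a\<in>{0..1}. \<forall>b\<in>{0..1}. a < b \<longrightarrow> Bp n p b < Bp n p a)
         \<and> Bp n p 0 = (Dp n p + 1)^2 - 1
         \<and> Bp n p 1 = 0"
proof -
  let ?D = "Dp n p"
  have "0 < ?D" using assms(1,4) by (simp add: Dp_pos)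
  have x: "x \<in> Defs.simplex n" "(1 + \<epsilon> * ?D) * pnorm n p x \<le> 1"
    using assms(5) by (auto simp: Yset_def)
  have "(CV n x)\<^sup>2 \<le> ((?D + 1) * pnorm n p x)\<^sup>2 - 1"
    using CV_power2_simplex [OF _ x(1)] power_mean_power2_pnorm [of n p x] x(1) assms(1,4)
    by (simp add: Dp_def Defs.simplex_def)
  also have "\<dots> \<le> Bp n p \<epsilon>"
  proof -
    have "0 < 1 + \<epsilon> * ?D" using \<open>0 < ?D\<close> assms(2) by (simp add: add_pos_nonneg)
    with x(2) have "pnorm n p x \<le> 1 / (1 + \<epsilon> * ?D)" by (simp add: field_simps)
    then have "((?D + 1) * pnorm n p x)\<^sup>2 \<le> ((?D + 1) * (1 / (1 + \<epsilon> * ?D)))\<^sup>2"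
      using \<open>0 < ?D\<close> by (intro power_mono mult_left_mono) (auto simp: pnorm_def)
    then show ?thesis by (simp add: Bp_def power_divide)
  qed
  moreover have "\<forall>a\<in>{0..1}. \<forall>b\<in>{0..1}. a < b \<longrightarrow> Bp n p b < Bp n p a"
    using \<open>0 < ?D\<close> by (simp add: Bp_strict_antimono)
  ultimately show ?thesis
    using \<open>0 < ?D\<close> by (simp add: Bp_def)
qed
end
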